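(* There exist two $k$-CNF formulae $\phi$ and $\psi$ (for some $k$) such that $\phi$ is satisfiable and $\psi$ is unsatisfiable, but $\phi\sim\psi$, i.e. they cannot be distinguished by the 1-WL test.
   Context: A $k$-CNF formula $\phi=\{C_1,\ldots,C_m\}$ over letters $p_1,\ldots,p_n$ is encoded as a labelled bipartite graph $G_\phi$: constraint nodes $v_1,\ldots,v_m$ (one per clause) labelled $b_i=1-$(number of negative literals in $C_i$); variable nodes $w_1,\ldots,w_n$ (one per letter) all with the same (empty) label; an edge $v_iw_j$ labelled $E_{ij}=1$ if $p_j\in C_i$, $-1$ if $\neg p_j\in C_i$, and no edge if $p_j$ does not occur in $C_i$. The 1-WL colouring of $G_\phi$: initial colours $C^V_0(v)=\mathtt{Colour}^V_0(\text{label}(v))$, $C^W_0(w)=\mathtt{Colour}^W_0(\text{label}(w))$; for $i=1,\ldots,|V\cup W|$, $C^V_i(v)=\mathtt{Colour}^V_i(C^V_{i-1}(v),\{\!\{(C^W_{i-1}(w),E_{vw}) : w\in N(v)\}\!\})$ and $C^W_i(w)=\mathtt{Colour}^W_i(C^W_{i-1}(w),\{\!\{(C^V_{i-1}(v),E_{vw}) : v\in N(w)\}\!\})$, where the $\mathtt{Colour}$ maps are injective into natural numbers not previously used; the output is the final pair of colourings. $\phi\sim\psi$ means that running this procedure on $G_\phi$ and $G_\psi$ gives the same outputs (same colour multisets) for all choices of the injective colouring functions. *)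

theory Defs
  imports Main "HOL-Library.Multiset"
begin

text \<open>Literals over letters p_j (j a natural number): (j, True) is p_j, (j, False) is the
negated letter.\<close>

type_synonym lit = "nat \<times> bool"
type_synonym clause = "lit set"

text \<open>phi is a k-CNF formula over the n letters {0..<n}: finitely many clauses, each with
exactly k literals, only using the given letters, and no letter occurring both positively
and negatively in one clause (so that the edge label of the encoding is well defined).\<close>
definition kcnf :: "nat \<Rightarrow> nat \<Rightarrow> clause set \<Rightarrow> bool" where
  "kcnf k n phi \<longleftrightarrow> finite phi \<and>
     (\<forall>C\<in>phi. card C = k \<and> fst ` C \<subseteq> {..<n} \<and> (\<forall>j. \<not> ((j, True) \<in> C \<and> (j, False) \<in> C)))"

definition satisfiable :: "clause set \<Rightarrow> bool" where
  "satisfiable phi \<longleftrightarrow> (\<exists>a :: nat \<Rightarrow> bool. \<forall>C\<in>phi. \<exists>l\<in>C. a (fst l) = snd l)"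

text \<open>The labelled bipartite graph G_phi: constraint nodes are the clauses, variable
nodes are the letters 0..<n.\<close>

definition clause_label :: "clause \<Rightarrow> int" where
  "clause_label C = 1 - int (card {l \<in> C. snd l = False})"

definition edge_label :: "clause \<Rightarrow> nat \<Rightarrow> int" where
  "edge_label C j = (if (j, True) \<in> C then 1 else if (j, False) \<in> C then -1 else 0)"

definition occurs :: "nat \<Rightarrow> clause \<Rightarrow> bool" where
  "occurs j C \<longleftrightarrow> (j, True) \<in> C \<or> (j, False) \<in> C"

definition nbrV :: "nat \<Rightarrow> clause \<Rightarrow> nat set" where
  "nbrV n C = {j \<in> {..<n}. occurs j C}"

definition nbrW :: "clause set \<Rightarrow> nat \<Rightarrow> clause set" where
  "nbrW phi j = {C \<in> phi. occurs j C}"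

fun wl :: "nat \<Rightarrow> clause set \<Rightarrow> (int \<Rightarrow> nat) \<Rightarrow> (nat \<Rightarrow> nat \<times> (nat \<times> int) multiset \<Rightarrow> nat)
           \<Rightarrow> (unit \<Rightarrow> nat) \<Rightarrow> (nat \<Rightarrow> nat \<times> (nat \<times> int) multiset \<Rightarrow> nat)
           \<Rightarrow> nat \<Rightarrow> (clause \<Rightarrow> nat) \<times> (nat \<Rightarrow> nat)" where
  "wl n phi cV0 cV cW0 cW 0 = (\<lambda>C. cV0 (clause_label C), \<lambda>j. cW0 ())"
| "wl n phi cV0 cV cW0 cW (Suc i) =
     (let (fv, fw) = wl n phi cV0 cV cW0 cW i in
       (\<lambda>C. cV (Suc i) (fv C, image_mset (\<lambda>j. (fw j, edge_label C j)) (mset_set (nbrV n C))),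
        \<lambda>j. cW (Suc i) (fw j, image_mset (\<lambda>C. (fv C, edge_label C j)) (mset_set (nbrW phi j)))))"

text \<open>Output: the multisets of final colours of the constraint nodes and of the variable
nodes, after |V \<union> W| = card phi + n rounds.\<close>
definition wl_output :: "nat \<Rightarrow> clause set \<Rightarrow> (int \<Rightarrow> nat) \<Rightarrow> (nat \<Rightarrow> nat \<times> (nat \<times> int) multiset \<Rightarrow> nat)
           \<Rightarrow> (unit \<Rightarrow> nat) \<Rightarrow> (nat \<Rightarrow> nat \<times> (nat \<times> int) multiset \<Rightarrow> nat)
           \<Rightarrow> nat multiset \<times> nat multiset" where
  "wl_output n phi cV0 cV cW0 cW =
     (let (fv, fw) = wl n phi cV0 cV cW0 cW (card phi + n) in
       (image_mset fv (mset_set phi), image_mset fw (mset_set {..<n})))"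

definition colour_range :: "(int \<Rightarrow> nat) \<Rightarrow> (nat \<Rightarrow> nat \<times> (nat \<times> int) multiset \<Rightarrow> nat)
           \<Rightarrow> (unit \<Rightarrow> nat) \<Rightarrow> (nat \<Rightarrow> nat \<times> (nat \<times> int) multiset \<Rightarrow> nat) \<Rightarrow> nat \<Rightarrow> nat set" where
  "colour_range cV0 cV cW0 cW i =
     (if i = 0 then range cV0 \<union> range cW0 else range (cV i) \<union> range (cW i))"

definition admissible :: "(int \<Rightarrow> nat) \<Rightarrow> (nat \<Rightarrow> nat \<times> (nat \<times> int) multiset \<Rightarrow> nat)
           \<Rightarrow> (unit \<Rightarrow> nat) \<Rightarrow> (nat \<Rightarrow> nat \<times> (nat \<times> int) multiset \<Rightarrow> nat) \<Rightarrow> bool" where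
  "admissible cV0 cV cW0 cW \<longleftrightarrow> inj cV0 \<and> inj cW0 \<and> (\<forall>i\<ge>1. inj (cV i) \<and> inj (cW i)) \<and>
     (\<forall>i\<ge>1. \<forall>j<i. (range (cV i) \<union> range (cW i)) \<inter> colour_range cV0 cV cW0 cW j = {})"

definition wl_equiv :: "nat \<Rightarrow> clause set \<Rightarrow> nat \<Rightarrow> clause set \<Rightarrow> bool" where
  "wl_equiv n phi n' psi \<longleftrightarrow>
     (\<forall>cV0 cV cW0 cW. admissible cV0 cV cW0 cW \<longrightarrow>
        wl_output n phi cV0 cV cW0 cW = wl_output n' psi cV0 cV cW0 cW)"

end

theory Submission
  imports Defs
begin

text \<open>The clauses (x_a \<or> x_b) and (\<not>x_a \<or> \<not>x_b) together say x_a \<noteq> x_b, so the 2-CNF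
formula of a graph is satisfiable iff the graph is bipartite. The hexagon is bipartite, two
disjoint triangles are not. But 1-WL cannot tell them apart: in both formulas every clause
sees two neighbours through edges of its own sign, and every letter sees two positive and two
negative clauses. Hence in both graphs the colour of a clause only depends on its label and all
letters share one colour, computed by the same recursion on the quotient.\<close>

text \<open>The partition of the constraint nodes by their label, with all letters in one class, is
equitable: a clause with label l sees the edge labels prof l, and every letter sees the
(clause label, edge label) pairs Q.\<close>

definition equitable :: "nat \<Rightarrow> clause set \<Rightarrow> (int \<Rightarrow> int multiset) \<Rightarrow> (int \<times> int) multiset \<Rightarrow> bool" where
  "equitable n phi prof Q \<longleftrightarrow>
     (\<forall>C\<in>phi. image_mset (edge_label C) (mset_set (nbrV n C)) = prof (clause_label C)) \<and>
     (\<forall>j<n. image_mset (\<lambda>C. (clause_label C, edge_label C j)) (mset_set (nbrW phi j)) = Q)"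

text \<open>1-WL on the quotient of an equitable partition: A l is the colour of the clauses with
label l, B the common colour of the letters.\<close>

fun quotient_wl :: "(int \<Rightarrow> int multiset) \<Rightarrow> (int \<times> int) multiset
           \<Rightarrow> (int \<Rightarrow> nat) \<Rightarrow> (nat \<Rightarrow> nat \<times> (nat \<times> int) multiset \<Rightarrow> nat)
           \<Rightarrow> (unit \<Rightarrow> nat) \<Rightarrow> (nat \<Rightarrow> nat \<times> (nat \<times> int) multiset \<Rightarrow> nat)
           \<Rightarrow> nat \<Rightarrow> (int \<Rightarrow> nat) \<times> nat" where
  "quotient_wl prof Q cV0 cV cW0 cW 0 = (cV0, cW0 ())"
| "quotient_wl prof Q cV0 cV cW0 cW (Suc i) = (let (A, B) = quotient_wl prof Q cV0 cV cW0 cW i in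
     (\<lambda>l. cV (Suc i) (A l, image_mset (\<lambda>e. (B, e)) (prof l)),
      cW (Suc i) (B, image_mset (\<lambda>(l, e). (A l, e)) Q)))"

lemma wl_eq_quotient_wl:
  assumes "finite phi" and "equitable n phi prof Q"
  shows "(\<forall>C\<in>phi. fst (wl n phi cV0 cV cW0 cW i) C
                   = fst (quotient_wl prof Q cV0 cV cW0 cW i) (clause_label C))
       \<and> (\<forall>j<n. snd (wl n phi cV0 cV cW0 cW i) j = snd (quotient_wl prof Q cV0 cV cW0 cW i))"
proof (induction i)
  case 0
  then show ?case by simp
next
  case (Suc i)
  obtain fv fw where fvw: "wl n phi cV0 cV cW0 cW i = (fv, fw)"
    by (cases "wl n phi cV0 cV cW0 cW i")
  obtain A B where AB: "quotient_wl prof Q cV0 cV cW0 cW i = (A, B)"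
    by (cases "quotient_wl prof Q cV0 cV cW0 cW i")
  have fv: "fv C = A (clause_label C)" if "C \<in> phi" for C
    using Suc fvw AB that by auto
  have fw: "fw j = B" if "j < n" for j
    using Suc fvw AB that by auto
  have clause_step: "image_mset (\<lambda>j. (fw j, edge_label C j)) (mset_set (nbrV n C))
      = image_mset (\<lambda>e. (B, e)) (prof (clause_label C))" if "C \<in> phi" for C
  proof -
    have "image_mset (\<lambda>j. (fw j, edge_label C j)) (mset_set (nbrV n C))
        = image_mset (\<lambda>e. (B, e)) (image_mset (edge_label C) (mset_set (nbrV n C)))"
      unfolding multiset.map_comp o_def
      by (rule image_mset_cong) (auto simp: nbrV_def fw)
    then show ?thesis
      using assms(2) that by (simp add: equitable_def)
  qed
  have letter_step: "image_mset (\<lambda>C. (fv C, edge_label C j)) (mset_set (nbrW phi j))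
      = image_mset (\<lambda>(l, e). (A l, e)) Q" if "j < n" for j
  proof -
    have "image_mset (\<lambda>C. (fv C, edge_label C j)) (mset_set (nbrW phi j))
        = image_mset (\<lambda>(l, e). (A l, e))
            (image_mset (\<lambda>C. (clause_label C, edge_label C j)) (mset_set (nbrW phi j)))"
      unfolding multiset.map_comp o_def
      using assms(1) by (intro image_mset_cong) (auto simp: nbrW_def fv)
    then show ?thesis
      using assms(2) that by (simp add: equitable_def)
  qed
  show ?case
    using clause_step letter_step fv fw fvw AB by simp
qed

lemma wl_output_equitable:
  assumes "finite phi" and "equitable n phi prof Q"
  shows "wl_output n phi cV0 cV cW0 cW =
     (let c = quotient_wl prof Q cV0 cV cW0 cW (card phi + n) in
       (image_mset (fst c) (image_mset clause_label (mset_set phi)), replicate_mset n (snd c)))"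
proof -
  define c where "c = quotient_wl prof Q cV0 cV cW0 cW (card phi + n)"
  obtain fv fw where fvw: "wl n phi cV0 cV cW0 cW (card phi + n) = (fv, fw)"
    by (cases "wl n phi cV0 cV cW0 cW (card phi + n)")
  with wl_eq_quotient_wl[OF assms]
  have fv: "\<forall>C\<in>phi. fv C = fst c (clause_label C)" and fw: "\<forall>j<n. fw j = snd c"
    unfolding c_def by (metis fst_conv snd_conv)+
  have "image_mset fv (mset_set phi) = image_mset (fst c) (image_mset clause_label (mset_set phi))"
    unfolding multiset.map_comp o_def using assms(1) fv by (intro image_mset_cong) auto
  moreover have "image_mset fw (mset_set {..<n}) = image_mset (\<lambda>_. snd c) (mset_set {..<n})"
    using fw by (intro image_mset_cong) auto
  then have "image_mset fw (mset_set {..<n}) = replicate_mset n (snd c)"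
    by (simp add: image_mset_const_eq)
  ultimately show ?thesis
    unfolding wl_output_def c_def[symmetric] using fvw by simp
qed

lemma wl_equiv_if_equitable:
  assumes "finite phi" "finite psi" "equitable n phi prof Q" "equitable n psi prof Q"
    and "image_mset clause_label (mset_set phi) = image_mset clause_label (mset_set psi)"
  shows "wl_equiv n phi n psi"
proof -
  have "card phi = card psi"
    using arg_cong[OF assms(5), of size] by simp
  then show ?thesis
    unfolding wl_equiv_def
    using assms by (simp add: wl_output_equitable)
qed

definition pos_clause :: "nat \<Rightarrow> nat \<Rightarrow> clause" where
  "pos_clause a b = {(a, True), (b, True)}"

definition neg_clause :: "nat \<Rightarrow> nat \<Rightarrow> clause" where
  "neg_clause a b = {(a, False), (b, False)}"

definition xor_clauses :: "(nat \<times> nat) list \<Rightarrow> clause list" where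
  "xor_clauses es = concat (map (\<lambda>(a, b). [pos_clause a b, neg_clause a b]) es)"

definition simple_graph :: "nat \<Rightarrow> (nat \<times> nat) list \<Rightarrow> bool" where
  "simple_graph n es \<longleftrightarrow>
     distinct (map (\<lambda>(a, b). {a, b}) es) \<and> (\<forall>(a, b)\<in>set es. a < n \<and> b < n \<and> a \<noteq> b)"

definition degree :: "(nat \<times> nat) list \<Rightarrow> nat \<Rightarrow> nat" where
  "degree es j = length (filter (\<lambda>(a, b). j = a \<or> j = b) es)"

lemma clause_label_pos_clause: "clause_label (pos_clause a b) = 1"
proof -
  have "{l \<in> pos_clause a b. snd l = False} = {}"
    unfolding pos_clause_def by auto
  then show ?thesis
    unfolding clause_label_def by (simp only:) simp
qed

lemma clause_label_neg_clause:
  assumes "a \<noteq> b"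
  shows "clause_label (neg_clause a b) = -1"
proof -
  have "{l \<in> neg_clause a b. snd l = False} = neg_clause a b"
    unfolding neg_clause_def by auto
  then show ?thesis
    unfolding clause_label_def neg_clause_def using assms by simp
qed

lemma edge_label_pos_clause: "edge_label (pos_clause a b) j = (if j = a \<or> j = b then 1 else 0)"
  unfolding edge_label_def pos_clause_def by auto

lemma edge_label_neg_clause: "edge_label (neg_clause a b) j = (if j = a \<or> j = b then -1 else 0)"
  unfolding edge_label_def neg_clause_def by auto

lemma occurs_pos_clause: "occurs j (pos_clause a b) \<longleftrightarrow> j = a \<or> j = b"
  unfolding occurs_def pos_clause_def by auto

lemma occurs_neg_clause: "occurs j (neg_clause a b) \<longleftrightarrow> j = a \<or> j = b"
  unfolding occurs_def neg_clause_def by auto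

lemma set_xor_clauses:
  "set (xor_clauses es) = (\<Union>(a, b)\<in>set es. {pos_clause a b, neg_clause a b})"
  unfolding xor_clauses_def by auto

lemma pos_clause_inject: "pos_clause a b = pos_clause c d \<Longrightarrow> {a, b} = {c, d}"
  unfolding pos_clause_def by (auto simp: doubleton_eq_iff)

lemma neg_clause_inject: "neg_clause a b = neg_clause c d \<Longrightarrow> {a, b} = {c, d}"
  unfolding neg_clause_def by (auto simp: doubleton_eq_iff)

lemma pos_clause_neq_neg_clause: "pos_clause a b \<noteq> neg_clause c d"
  unfolding pos_clause_def neg_clause_def by auto

lemma distinct_xor_clauses:
  assumes "distinct (map (\<lambda>(a, b). {a, b}) es)"
  shows "distinct (xor_clauses es)"
  using assms
proof (induction es)
  case Nil
  then show ?case by (simp add: xor_clauses_def)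
next
  case (Cons e es)
  obtain a b where e: "e = (a, b)" by (cases e)
  have "pos_clause a b \<notin> set (xor_clauses es)" "neg_clause a b \<notin> set (xor_clauses es)"
    using Cons.prems e
    by (auto simp: set_xor_clauses pos_clause_neq_neg_clause pos_clause_neq_neg_clause[symmetric]
        dest!: pos_clause_inject neg_clause_inject)
  with Cons e show ?case
    by (simp add: xor_clauses_def pos_clause_neq_neg_clause)
qed

lemma kcnf_xor_clauses: "simple_graph n es \<Longrightarrow> kcnf 2 n (set (xor_clauses es))"
  unfolding kcnf_def simple_graph_def set_xor_clauses pos_clause_def neg_clause_def by auto

lemma satisfiable_xor_clauses_iff:
  "satisfiable (set (xor_clauses es)) \<longleftrightarrow> (\<exists>x :: nat \<Rightarrow> bool. \<forall>(a, b)\<in>set es. x a \<noteq> x b)"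
proof -
  have "(\<forall>C\<in>set (xor_clauses es). \<exists>l\<in>C. x (fst l) = snd l) \<longleftrightarrow>
        (\<forall>(a, b)\<in>set es. x a \<noteq> x b)" for x :: "nat \<Rightarrow> bool"
    by (auto simp: set_xor_clauses pos_clause_def neg_clause_def)
  then show ?thesis
    unfolding satisfiable_def by (simp only:)
qed

lemma mset_set_nbrW: "distinct L \<Longrightarrow> mset_set (nbrW (set L) j) = filter_mset (occurs j) (mset L)"
  unfolding nbrW_def by (metis distinct_filter mset_filter mset_set_set set_filter)

lemma letter_profile_xor_clauses:
  assumes "\<forall>(a, b)\<in>set es. a \<noteq> b"
  shows "image_mset (\<lambda>C. (clause_label C, edge_label C j))
           (filter_mset (occurs j) (mset (xor_clauses es)))
       = replicate_mset (degree es j) (1, 1) + replicate_mset (degree es j) (-1, -1)"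
  using assms
proof (induction es)
  case Nil
  then show ?case by (simp add: xor_clauses_def degree_def)
next
  case (Cons e es)
  then show ?case
    by (cases e) (auto simp: xor_clauses_def degree_def occurs_pos_clause occurs_neg_clause
        clause_label_pos_clause clause_label_neg_clause edge_label_pos_clause edge_label_neg_clause)
qed

lemma clause_labels_xor_clauses:
  assumes "\<forall>(a, b)\<in>set es. a \<noteq> b"
  shows "image_mset clause_label (mset (xor_clauses es))
       = replicate_mset (length es) 1 + replicate_mset (length es) (-1)"
  using assms
proof (induction es)
  case Nil
  then show ?case by (simp add: xor_clauses_def)
next
  case (Cons e es)
  then show ?case
    by (cases e) (auto simp: xor_clauses_def clause_label_pos_clause clause_label_neg_clause)
qed

lemma equitable_xor_clauses:
  assumes "simple_graph n es" and "\<forall>j<n. degree es j = d"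
  shows "equitable n (set (xor_clauses es)) (\<lambda>l. {#l, l#})
           (replicate_mset d (1, 1) + replicate_mset d (-1, -1))"
proof -
  have edges: "\<forall>(a, b)\<in>set es. a < n \<and> b < n \<and> a \<noteq> b"
    using assms(1) by (simp add: simple_graph_def)
  have nbrV_pos: "nbrV n (pos_clause a b) = {a, b}" and nbrV_neg: "nbrV n (neg_clause a b) = {a, b}"
    if "a < n" "b < n" for a b
    using that by (auto simp: nbrV_def occurs_pos_clause occurs_neg_clause)
  have "image_mset (edge_label C) (mset_set (nbrV n C)) = {#clause_label C, clause_label C#}"
    if "C \<in> set (xor_clauses es)" for C
    using that edges
    by (auto simp: set_xor_clauses nbrV_pos nbrV_neg clause_label_pos_clause clause_label_neg_clause
        edge_label_pos_clause edge_label_neg_clause)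
  moreover have "distinct (xor_clauses es)"
    using assms(1) distinct_xor_clauses by (simp add: simple_graph_def)
  moreover have "\<forall>(a, b)\<in>set es. a \<noteq> b"
    using edges by auto
  ultimately show ?thesis
    unfolding equitable_def
    using assms(2) by (simp add: mset_set_nbrW letter_profile_xor_clauses)
qed

lemma wl_equiv_xor_clauses_regular:
  assumes "simple_graph n es" "simple_graph n es'"
    and "\<forall>j<n. degree es j = d" "\<forall>j<n. degree es' j = d"
    and "length es = length es'"
  shows "wl_equiv n (set (xor_clauses es)) n (set (xor_clauses es'))"
proof (rule wl_equiv_if_equitable)
  let ?Q = "replicate_mset d (1, 1) + replicate_mset d (-1, -1)"
  show "equitable n (set (xor_clauses es)) (\<lambda>l. {#l, l#}) ?Q"
    "equitable n (set (xor_clauses es')) (\<lambda>l. {#l, l#}) ?Q"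
    using assms by (simp_all add: equitable_xor_clauses)
  show "image_mset clause_label (mset_set (set (xor_clauses es)))
      = image_mset clause_label (mset_set (set (xor_clauses es')))"
    using assms(1,2,5) unfolding simple_graph_def
    by (simp add: distinct_xor_clauses mset_set_set clause_labels_xor_clauses case_prod_beta)
qed simp_all

definition hexagon :: "(nat \<times> nat) list" where
  "hexagon = [(0, 1), (1, 2), (2, 3), (3, 4), (4, 5), (5, 0)]"

definition two_triangles :: "(nat \<times> nat) list" where
  "two_triangles = [(0, 1), (1, 2), (2, 0), (3, 4), (4, 5), (5, 3)]"

lemma simple_graph_hexagon: "simple_graph 6 hexagon"
  by (simp add: simple_graph_def hexagon_def doubleton_eq_iff)

lemma simple_graph_two_triangles: "simple_graph 6 two_triangles"
  by (simp add: simple_graph_def two_triangles_def doubleton_eq_iff)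

lemma degree_hexagon: "\<forall>j<6. degree hexagon j = 2"
  by (auto simp: numeral_eq_Suc less_Suc_eq degree_def hexagon_def)

lemma degree_two_triangles: "\<forall>j<6. degree two_triangles j = 2"
  by (auto simp: numeral_eq_Suc less_Suc_eq degree_def two_triangles_def)

lemma hexagon_bipartite: "\<exists>x :: nat \<Rightarrow> bool. \<forall>(a, b)\<in>set hexagon. x a \<noteq> x b"
  by (rule exI[of _ even]) (simp add: hexagon_def)

lemma two_triangles_not_bipartite: "\<not> (\<exists>x :: nat \<Rightarrow> bool. \<forall>(a, b)\<in>set two_triangles. x a \<noteq> x b)"
  by (auto simp: two_triangles_def)

theorem proposition6:
  shows "\<exists>k n phi n' psi. kcnf k n phi \<and> kcnf k n' psi \<and>
           satisfiable phi \<and> \<not> satisfiable psi \<and> wl_equiv n phi n' psi"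
proof (intro exI conjI)
  show "kcnf 2 6 (set (xor_clauses hexagon))" "kcnf 2 6 (set (xor_clauses two_triangles))"
    using simple_graph_hexagon simple_graph_two_triangles by (simp_all add: kcnf_xor_clauses)
  show "satisfiable (set (xor_clauses hexagon))"
    using hexagon_bipartite by (simp add: satisfiable_xor_clauses_iff)
  show "\<not> satisfiable (set (xor_clauses two_triangles))"
    using two_triangles_not_bipartite by (simp add: satisfiable_xor_clauses_iff)
  show "wl_equiv 6 (set (xor_clauses hexagon)) 6 (set (xor_clauses two_triangles))"
    by (rule wl_equiv_xor_clauses_regular[OF simple_graph_hexagon simple_graph_two_triangles
          degree_hexagon degree_two_triangles]) (simp add: hexagon_def two_triangles_def)
qed

end
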